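(* Let $\Omega\subset\mathbb{R}^3$ be a domain with boundary $\partial\Omega$ and outward unit normal $\mathbf{n}$, and consider an isentropic Newtonian fluid on $\Omega$ with state $\boldsymbol{x}=(\rho,\mathbf{v}^{\mathsf T})^{\mathsf T}$ governed by $$\partial_t\rho=-\mathrm{div}\,\mathbf{e}_{\mathbf{v}},\qquad \partial_t\mathbf{v}=-\nabla e_\rho-\frac{1}{\rho}G_{\boldsymbol{\omega}}\mathbf{e}_{\mathbf{v}}-\frac{1}{\rho}\mathrm{Div}\,\boldsymbol{\tau},$$ where the total energy is $\mathcal{H}=\int_\Omega\tfrac12\rho\,\mathbf{v}\cdot\mathbf{v}+\rho\,u(\rho)$ and the efforts are $e_\rho=\delta_\rho\mathcal{H}=\tfrac12\mathbf{v}\cdot\mathbf{v}+h$, $\mathbf{e}_{\mathbf{v}}=\delta_{\mathbf{v}}\mathcal{H}=\rho\mathbf{v}$. Assume the vorticity vanishes on $\partial\Omega$ (the vorticity is a purely internal phenomenon). Then the governing equations can be written as the port-Hamiltonian system with dissipation $$\partial_t\boldsymbol{x}=(\mathcal{J}-\mathcal{G}^{*}S\mathcal{G})\mathbf{e},\quad \mathbf{e}=(e_\rho,\mathbf{e}_{\mathbf{v}}^{\mathsf T})^{\mathsf T},$$ $$\mathcal{J}=\begin{bmatrix}0&-\mathrm{div}\\-\nabla&-\frac{1}{\rho}G_{\boldsymbol{\omega}}\end{bmatrix},\ \mathcal{G}^{*}=\begin{bmatrix}0&0\\0&\mathcal{G}_{\boldsymbol{\tau}}^{*}\end{bmatrix},\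 S=\begin{bmatrix}0&0\\0&S_{\boldsymbol{\tau}}\end{bmatrix},\ \mathcal{G}=\begin{bmatrix}0&0\\0&\mathcal{G}_{\boldsymbol{\tau}}\end{bmatrix},$$ and along solutions $$\frac{d\mathcal{H}}{dt}\leq\int_{\partial\Omega}\mathbf{f}_\partial\,\mathbf{e}_\partial,$$ where $\mathbf{f}_\partial=\big(e_\rho-\tfrac{e_d}{\rho}\big)\big|_{\partial\Omega}$ and $\mathbf{e}_\partial=-(\mathbf{e}_{\mathbf{v}}\cdot\mathbf{n})|_{\partial\Omega}$, with $e_d=\big(\tfrac43\mu+\kappa\big)\,\mathrm{div}(\mathbf{e}_{\mathbf{v}}/\rho)$ the effort associated with dissipation by dilatation.
   Context: Notation: $\rho>0$ density, $\mathbf{v}$ velocity, $u(\rho)$ specific internal energy with $du=-p\,d(1/\rho)$ ($p$ static pressure), $h=u+p/\rho$ enthalpy. Viscous tensor $\boldsymbol{\tau}=-\mu(\mathrm{Grad}\,\mathbf{v}+(\mathrm{Grad}\,\mathbf{v})^{\mathsf T}-\frac23(\mathrm{div}\,\mathbf{v})I)-\kappa(\mathrm{div}\,\mathbf{v})I$ with constant shear and dilatational viscosities $\mu,\kappa\geq0$. Vorticity $\boldsymbol{\omega}=\mathrm{curl}\,\mathbf{v}=(\omega_1,\omega_2,\omega_3)^{\mathsf T}$, gyroscope $G_{\boldsymbol{\omega}}=\begin{bmatrix}0&-\omega_3&\omega_2\\\omega_3&0&-\omega_1\\-\omega_2&\omega_1&0\end{bmatrix}$ (so $G_{\boldsymbol{\omega}}\mathbf{v}=\boldsymbol{\omega}\times\mathbf{v}$).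 Operators: $\mathcal{G}_r\mathbf{w}=\mathrm{curl}(\mathbf{w}/\rho)$, $\mathcal{G}_d\mathbf{w}=\mathrm{div}(\mathbf{w}/\rho)$, $\mathcal{G}_r^{*}\mathbf{z}=\frac1\rho\mathrm{curl}\,\mathbf{z}$, $\mathcal{G}_d^{*}f=-\frac1\rho\nabla f$, $\mathcal{G}_{\boldsymbol{\tau}}=\begin{bmatrix}\mathcal{G}_r\\\mathcal{G}_d\end{bmatrix}$, $\mathcal{G}_{\boldsymbol{\tau}}^{*}=\begin{bmatrix}\mathcal{G}_r^{*}&\mathcal{G}_d^{*}\end{bmatrix}$, $S_{\boldsymbol{\tau}}=\mathrm{diag}(\mu,\tfrac43\mu+\kappa)$. $\mathrm{Grad}$ and $\mathrm{Div}$ are the gradient of a vector field and divergence of a tensor field. *)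

theory Defs
  imports "HOL-Analysis.Analysis"
begin

definition pd :: "3 \<Rightarrow> (real^3 \<Rightarrow> 'b::real_normed_vector) \<Rightarrow> real^3 \<Rightarrow> 'b" where
  "pd i f x = frechet_derivative f (at x) (axis i 1)"

definition grad :: "(real^3 \<Rightarrow> real) \<Rightarrow> real^3 \<Rightarrow> real^3" where
  "grad f x = (\<chi> i. pd i f x)"

definition divg :: "(real^3 \<Rightarrow> real^3) \<Rightarrow> real^3 \<Rightarrow> real" where
  "divg F x = (\<Sum>i\<in>UNIV. pd i (\<lambda>y. F y $ i) x)"

definition curl :: "(real^3 \<Rightarrow> real^3) \<Rightarrow> real^3 \<Rightarrow> real^3" where
  "curl F x = vector
     [pd 2 (\<lambda>y. F y $ 3) x - pd 3 (\<lambda>y. F y $ 2) x,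
      pd 3 (\<lambda>y. F y $ 1) x - pd 1 (\<lambda>y. F y $ 3) x,
      pd 1 (\<lambda>y. F y $ 2) x - pd 2 (\<lambda>y. F y $ 1) x]"

definition Grad :: "(real^3 \<Rightarrow> real^3) \<Rightarrow> real^3 \<Rightarrow> real^3^3" where
  "Grad F x = (\<chi> i j. pd j (\<lambda>y. F y $ i) x)"

definition Div :: "(real^3 \<Rightarrow> real^3^3) \<Rightarrow> real^3 \<Rightarrow> real^3" where
  "Div T x = (\<chi> i. \<Sum>j\<in>UNIV. pd j (\<lambda>y. T y $ i $ j) x)"

text \<open>Gyroscope matrix G_w, so that G_w *v v = w x v.\<close>
definition gyro :: "real^3 \<Rightarrow> real^3^3" where
  "gyro w = vector [vector [0, - (w $ 3), w $ 2],
                    vector [w $ 3, 0, - (w $ 1)],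
                    vector [- (w $ 2), w $ 1, 0]]"

definition tau :: "real \<Rightarrow> real \<Rightarrow> (real^3 \<Rightarrow> real^3) \<Rightarrow> real^3 \<Rightarrow> real^3^3" where
  "tau \<mu> \<kappa> v x =
     - (\<mu> *\<^sub>R (Grad v x + transpose (Grad v x) - ((2/3) * divg v x) *\<^sub>R mat 1))
     - (\<kappa> * divg v x) *\<^sub>R mat 1"

definition C1_on :: "(real^3) set \<Rightarrow> (real^3 \<Rightarrow> 'b::real_normed_vector) \<Rightarrow> bool" where
  "C1_on W F \<longleftrightarrow> F differentiable_on W \<and> (\<forall>i. continuous_on W (pd i F))"

definition C2_on :: "(real^3) set \<Rightarrow> (real^3 \<Rightarrow> 'b::real_normed_vector) \<Rightarrow> bool" where
  "C2_on W F \<longleftrightarrow> C1_on W F \<and> (\<forall>i. C1_on W (pd i F))"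

definition Gr :: "(real^3 \<Rightarrow> real) \<Rightarrow> (real^3 \<Rightarrow> real^3) \<Rightarrow> real^3 \<Rightarrow> real^3" where
  "Gr rho w = curl (\<lambda>y. w y /\<^sub>R rho y)"

definition Gd :: "(real^3 \<Rightarrow> real) \<Rightarrow> (real^3 \<Rightarrow> real^3) \<Rightarrow> real^3 \<Rightarrow> real" where
  "Gd rho w = divg (\<lambda>y. w y /\<^sub>R rho y)"

definition Gr_adj :: "(real^3 \<Rightarrow> real) \<Rightarrow> (real^3 \<Rightarrow> real^3) \<Rightarrow> real^3 \<Rightarrow> real^3" where
  "Gr_adj rho z x = (1 / rho x) *\<^sub>R curl z x"

definition Gd_adj :: "(real^3 \<Rightarrow> real) \<Rightarrow> (real^3 \<Rightarrow> real) \<Rightarrow> real^3 \<Rightarrow> real^3" where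
  "Gd_adj rho f x = - ((1 / rho x) *\<^sub>R grad f x)"

definition G_tau :: "(real^3 \<Rightarrow> real) \<Rightarrow> (real^3 \<Rightarrow> real^3)
                      \<Rightarrow> (real^3 \<Rightarrow> real^3) \<times> (real^3 \<Rightarrow> real)" where
  "G_tau rho w = (Gr rho w, Gd rho w)"

definition G_tau_adj :: "(real^3 \<Rightarrow> real) \<Rightarrow> (real^3 \<Rightarrow> real^3) \<times> (real^3 \<Rightarrow> real)
                          \<Rightarrow> real^3 \<Rightarrow> real^3" where
  "G_tau_adj rho zf = (\<lambda>x. Gr_adj rho (fst zf) x + Gd_adj rho (snd zf) x)"

definition S_tau :: "real \<Rightarrow> real \<Rightarrow> (real^3 \<Rightarrow> real^3) \<times> (real^3 \<Rightarrow> real)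
                      \<Rightarrow> (real^3 \<Rightarrow> real^3) \<times> (real^3 \<Rightarrow> real)" where
  "S_tau \<mu> \<kappa> zf = ((\<lambda>x. \<mu> *\<^sub>R fst zf x), (\<lambda>x. ((4/3) * \<mu> + \<kappa>) * snd zf x))"

type_synonym effort = "(real^3 \<Rightarrow> real) \<times> (real^3 \<Rightarrow> real^3)"
type_synonym dissfield = "(real^3 \<Rightarrow> real) \<times> ((real^3 \<Rightarrow> real^3) \<times> (real^3 \<Rightarrow> real))"

definition J_op :: "(real^3 \<Rightarrow> real) \<Rightarrow> (real^3 \<Rightarrow> real^3) \<Rightarrow> effort \<Rightarrow> effort" where
  "J_op rho omega e =
     ((\<lambda>x. - divg (snd e) x),
      (\<lambda>x. - grad (fst e) x - (1 / rho x) *\<^sub>R (gyro (omega x) *v snd e x)))"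

definition G_full :: "(real^3 \<Rightarrow> real) \<Rightarrow> effort \<Rightarrow> dissfield" where
  "G_full rho e = ((\<lambda>x. 0), G_tau rho (snd e))"

definition S_full :: "real \<Rightarrow> real \<Rightarrow> dissfield \<Rightarrow> dissfield" where
  "S_full \<mu> \<kappa> d = ((\<lambda>x. 0), S_tau \<mu> \<kappa> (snd d))"

definition G_adj_full :: "(real^3 \<Rightarrow> real) \<Rightarrow> dissfield \<Rightarrow> effort" where
  "G_adj_full rho d = ((\<lambda>x. 0), G_tau_adj rho (snd d))"

definition pH_rhs :: "(real^3 \<Rightarrow> real) \<Rightarrow> (real^3 \<Rightarrow> real^3) \<Rightarrow> real \<Rightarrow> real \<Rightarrow> effort \<Rightarrow> effort" where
  "pH_rhs rho omega \<mu> \<kappa> e =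
     (let j = J_op rho omega e; d = G_adj_full rho (S_full \<mu> \<kappa> (G_full rho e))
      in ((\<lambda>x. fst j x - fst d x), (\<lambda>x. snd j x - snd d x)))"

text \<open>Boundary of Omega with outward unit normal n and surface measure sigma,
  characterised by the Gauss divergence theorem for C^1 fields.\<close>
definition gauss_boundary :: "(real^3) set \<Rightarrow> (real^3) measure \<Rightarrow> (real^3 \<Rightarrow> real^3) \<Rightarrow> bool" where
  "gauss_boundary \<Omega> \<sigma> n \<longleftrightarrow>
     finite_measure \<sigma> \<and> space \<sigma> = frontier \<Omega> \<and>
     sets \<sigma> = sets (restrict_space borel (frontier \<Omega>)) \<and>
     continuous_on (frontier \<Omega>) n \<and> (\<forall>x\<in>frontier \<Omega>. norm (n x) = 1) \<and>
     (\<forall>W F. open W \<longrightarrow> closure \<Omega> \<subseteq> W \<longrightarrow> C1_on W F \<longrightarrow>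
        integral \<Omega> (divg F) = (\<integral>x. F x \<bullet> n x \<partial>\<sigma>))"

end

theory Submission
  imports Defs
begin

text \<open>
  Since \<open>G\<^sub>r e\<^sub>v = curl v\<close> and \<open>G\<^sub>d e\<^sub>v = div v\<close>, the dissipative part
  \<open>G\<^sub>\<tau>\<^sup>* S\<^sub>\<tau> G\<^sub>\<tau> e\<^sub>v\<close> equals \<open>(\<mu> curl curl v - (4/3 \<mu> + \<kappa>) \<nabla> div v) / \<rho>\<close>,
  which is \<open>(Div \<tau>) / \<rho>\<close> by the symmetry of second derivatives; this gives the
  port-Hamiltonian form. For the energy, the rate of change of the energy density is
  \<open>\<rho>\<^sub>t e\<^sub>\<rho> + e\<^sub>v \<cdot> v\<^sub>t\<close>. Inserting the equations of motion, the gyroscopic term drops out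
  (\<open>e\<^sub>v \<cdot> (\<omega> \<times> e\<^sub>v) = 0\<close>) and the rest is \<open>div F - \<mu> |curl v|\<^sup>2 - (4/3 \<mu> + \<kappa>) (div v)\<^sup>2\<close>
  for the flux \<open>F = - e\<^sub>\<rho> e\<^sub>v - \<mu> curl v \<times> v + (4/3 \<mu> + \<kappa>) (div v) v\<close>. Dropping the
  nonnegative dissipation and applying the divergence theorem bounds \<open>dH/dt\<close> by the
  boundary flux of \<open>F\<close>, and where the vorticity vanishes \<open>F \<cdot> n = f\<^sub>\<partial> e\<^sub>\<partial>\<close>.
\<close>

section \<open>Partial derivatives\<close>

lemma has_derivative_imp_pd: "(f has_derivative f') (at x) \<Longrightarrow> pd i f x = f' (axis i 1)"
  unfolding pd_def using frechet_derivative_at by metis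

lemma pd_cong:
  assumes "open S" "x \<in> S" "\<And>y. y \<in> S \<Longrightarrow> f y = g y"
  shows "pd i f x = pd i g x"
proof -
  have "(f has_derivative D) (at x) \<longleftrightarrow> (g has_derivative D) (at x)" for D
    using assms has_derivative_transform_within_open[of _ D x UNIV S] by metis
  then show ?thesis unfolding pd_def frechet_derivative_def by simp
qed

lemma pd_bilinear:
  fixes f :: "real^3 \<Rightarrow> 'a::real_normed_vector" and g :: "real^3 \<Rightarrow> 'b::real_normed_vector"
    and prod :: "'a \<Rightarrow> 'b \<Rightarrow> 'c::real_normed_vector"
  assumes "bounded_bilinear prod" "f differentiable (at x)" "g differentiable (at x)"
  shows "pd i (\<lambda>y. prod (f y) (g y)) x = prod (f x) (pd i g x) + prod (pd i f x) (g x)"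
  using bounded_bilinear.FDERIV[OF assms(1) assms(2,3)[unfolded frechet_derivative_works]]
  by (subst has_derivative_imp_pd) (simp_all add: pd_def)

lemma pd_linear:
  fixes f :: "real^3 \<Rightarrow> 'a::real_normed_vector" and L :: "'a \<Rightarrow> 'b::real_normed_vector"
  assumes "bounded_linear L" "f differentiable (at x)"
  shows "pd i (\<lambda>y. L (f y)) x = L (pd i f x)"
  using bounded_linear.has_derivative[OF assms(1) assms(2)[unfolded frechet_derivative_works]]
  by (subst has_derivative_imp_pd) (simp_all add: pd_def)

lemma pd_add:
  assumes "f differentiable (at x)" "g differentiable (at x)"
  shows "pd i (\<lambda>y. f y + g y) x = pd i f x + pd i g x"
  using has_derivative_add[OF assms[unfolded frechet_derivative_works]]
  by (subst has_derivative_imp_pd) (simp_all add: pd_def)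

lemma pd_diff:
  assumes "f differentiable (at x)" "g differentiable (at x)"
  shows "pd i (\<lambda>y. f y - g y) x = pd i f x - pd i g x"
  using has_derivative_diff[OF assms[unfolded frechet_derivative_works]]
  by (subst has_derivative_imp_pd) (simp_all add: pd_def)

lemma pd_minus:
  assumes "f differentiable (at x)"
  shows "pd i (\<lambda>y. - f y) x = - pd i f x"
  using pd_linear[OF bounded_linear_minus[OF bounded_linear_ident] assms] by simp

lemma pd_const: "pd i (\<lambda>y. c) x = 0"
  by (subst has_derivative_imp_pd[OF has_derivative_const]) simp

lemma pd_sum:
  assumes "finite A" "\<And>a. a \<in> A \<Longrightarrow> f a differentiable (at x)"
  shows "pd i (\<lambda>y. \<Sum>a\<in>A. f a y) x = (\<Sum>a\<in>A. pd i (f a) x)"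
proof -
  have "((\<lambda>y. \<Sum>a\<in>A. f a y) has_derivative (\<lambda>h. \<Sum>a\<in>A. frechet_derivative (f a) (at x) h)) (at x)"
    using assms by (intro has_derivative_sum) (auto simp: frechet_derivative_works[symmetric])
  then show ?thesis by (subst has_derivative_imp_pd) (simp_all add: pd_def)
qed

lemma pd_vec_nth:
  assumes "f differentiable (at x)"
  shows "pd i (\<lambda>y. f y $ k) x = pd i f x $ k"
  using pd_linear[OF bounded_linear_vec_nth assms] by simp

lemma pd_scaleR_right:
  assumes "f differentiable (at x)"
  shows "pd i (\<lambda>y. c *\<^sub>R f y) x = c *\<^sub>R pd i f x"
  using pd_linear[OF bounded_linear_scaleR_right assms] by simp

lemma pd_mult:
  fixes f g :: "real^3 \<Rightarrow> real"
  assumes "f differentiable (at x)" "g differentiable (at x)"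
  shows "pd i (\<lambda>y. f y * g y) x = f x * pd i g x + pd i f x * g x"
  using pd_bilinear[OF bounded_bilinear_mult assms] .

lemma pd_scaleR:
  fixes f :: "real^3 \<Rightarrow> real" and g :: "real^3 \<Rightarrow> 'a::real_normed_vector"
  assumes "f differentiable (at x)" "g differentiable (at x)"
  shows "pd i (\<lambda>y. f y *\<^sub>R g y) x = f x *\<^sub>R pd i g x + pd i f x *\<^sub>R g x"
  using pd_bilinear[OF bounded_bilinear_scaleR assms] .

section \<open>Symmetry of mixed partial derivatives\<close>

lemma has_real_derivative_pd_line:
  fixes g :: "real^3 \<Rightarrow> real"
  assumes "g differentiable (at (y + s *\<^sub>R axis k 1))"
  shows "((\<lambda>s. g (y + s *\<^sub>R axis k 1)) has_real_derivative pd k g (y + s *\<^sub>R axis k 1)) (at s)"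
proof -
  let ?g' = "frechet_derivative g (at (y + s *\<^sub>R axis k 1))"
  have "((\<lambda>s. y + s *\<^sub>R axis k 1) has_derivative (\<lambda>h. h *\<^sub>R axis k (1::real))) (at s)"
    by (auto intro!: derivative_eq_intros)
  from has_derivative_compose[OF this assms[unfolded frechet_derivative_works]]
  have "((\<lambda>s. g (y + s *\<^sub>R axis k 1)) has_derivative (\<lambda>h. ?g' (h *\<^sub>R axis k 1))) (at s)" .
  moreover have "linear ?g'"
    using assms[unfolded frechet_derivative_works] has_derivative_linear by blast
  ultimately show ?thesis
    unfolding has_field_derivative_def pd_def by (simp add: linear_cmul mult_commute_abs)
qed

lemma second_difference_mvt:
  fixes f :: "real^3 \<Rightarrow> real"
  assumes h: "h > 0"
    and inU: "\<And>s t. 0 \<le> s \<Longrightarrow> s \<le> h \<Longrightarrow> 0 \<le> t \<Longrightarrow> t \<le> h \<Longrightarrow> x + s *\<^sub>R axis i 1 + t *\<^sub>R axis j 1 \<in> U"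
    and df: "\<And>y. y \<in> U \<Longrightarrow> f differentiable (at y)"
    and ddf: "\<And>y. y \<in> U \<Longrightarrow> pd i f differentiable (at y)"
  obtains s t where "0 < s" "s < h" "0 < t" "t < h"
    "f (x + h *\<^sub>R axis i 1 + h *\<^sub>R axis j 1) - f (x + h *\<^sub>R axis i 1) - f (x + h *\<^sub>R axis j 1) + f x
       = h * h * pd j (pd i f) (x + s *\<^sub>R axis i 1 + t *\<^sub>R axis j 1)"
proof -
  define ei :: "real^3" where "ei = axis i 1"
  define ej :: "real^3" where "ej = axis j 1"
  have U: "x + s *\<^sub>R ei + t *\<^sub>R ej \<in> U" if "0 \<le> s" "s \<le> h" "0 \<le> t" "t \<le> h" for s t
    using inU that unfolding ei_def ej_def by blast
  define g where "g s = f ((x + h *\<^sub>R ej) + s *\<^sub>R ei) - f (x + s *\<^sub>R ei)" for s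
  have "(g has_real_derivative (pd i f ((x + h *\<^sub>R ej) + s *\<^sub>R ei) - pd i f (x + s *\<^sub>R ei))) (at s)"
    if "0 \<le> s" "s \<le> h" for s
  proof -
    have "(x + h *\<^sub>R ej) + s *\<^sub>R ei \<in> U" "x + s *\<^sub>R ei \<in> U"
      using U[of s h] U[of s 0] that h by (simp_all add: algebra_simps)
    then show ?thesis unfolding g_def ei_def
      by (intro DERIV_diff has_real_derivative_pd_line) (auto simp: df ei_def)
  qed
  from MVT2[OF h, of g, OF this]
  obtain s where s: "0 < s" "s < h"
    and gs: "g h - g 0 = h * (pd i f ((x + h *\<^sub>R ej) + s *\<^sub>R ei) - pd i f (x + s *\<^sub>R ei))"
    by auto
  define \<phi> where "\<phi> t = pd i f ((x + s *\<^sub>R ei) + t *\<^sub>R ej)" for t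
  have "(\<phi> has_real_derivative pd j (pd i f) ((x + s *\<^sub>R ei) + t *\<^sub>R ej)) (at t)"
    if "0 \<le> t" "t \<le> h" for t
    unfolding \<phi>_def ej_def
    by (rule has_real_derivative_pd_line) (use U[of s t] that s ddf in \<open>auto simp: ej_def\<close>)
  from MVT2[OF h, of \<phi>, OF this]
  obtain t where t: "0 < t" "t < h"
    and \<phi>t: "\<phi> h - \<phi> 0 = h * pd j (pd i f) ((x + s *\<^sub>R ei) + t *\<^sub>R ej)"
    by auto
  have "f (x + h *\<^sub>R ei + h *\<^sub>R ej) - f (x + h *\<^sub>R ei) - f (x + h *\<^sub>R ej) + f x = g h - g 0"
    unfolding g_def by (simp add: algebra_simps)
  also have "\<dots> = h * (\<phi> h - \<phi> 0)"
    unfolding gs \<phi>_def by (simp add: algebra_simps)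
  also have "\<dots> = h * h * pd j (pd i f) (x + s *\<^sub>R ei + t *\<^sub>R ej)"
    unfolding \<phi>t by simp
  finally show ?thesis using that s t unfolding ei_def ej_def by blast
qed

lemma axis_square_in_ball:
  fixes x :: "real^'n"
  assumes "0 \<le> s" "0 \<le> t" "s + t < d"
  shows "x + s *\<^sub>R axis i 1 + t *\<^sub>R axis j 1 \<in> ball x d"
proof -
  have "norm (s *\<^sub>R axis i (1::real) + t *\<^sub>R axis j 1) \<le> s + t"
    using norm_triangle_ineq[of "s *\<^sub>R axis i (1::real)" "t *\<^sub>R axis j 1"] assms by simp
  moreover have "dist x (x + v) = norm v" for v :: "real^'n"
    by (simp add: dist_norm)
  ultimately show ?thesis using assms by (simp add: add.assoc)
qed

lemma pd_pd_commute:
  fixes f :: "real^3 \<Rightarrow> real"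
  assumes U: "open U" "x \<in> U"
    and df: "\<And>y. y \<in> U \<Longrightarrow> f differentiable (at y)"
    and ddf: "\<And>k y. y \<in> U \<Longrightarrow> pd k f differentiable (at y)"
    and cont: "continuous_on U (pd j (pd i f))" "continuous_on U (pd i (pd j f))"
  shows "pd j (pd i f) x = pd i (pd j f) x"
proof -
  have close: "\<bar>pd j (pd i f) x - pd i (pd j f) x\<bar> \<le> 2 * e" if e: "e > 0" for e
  proof -
    obtain d1 where d1: "d1 > 0"
      "\<And>y. y \<in> U \<Longrightarrow> dist y x < d1 \<Longrightarrow> dist (pd j (pd i f) y) (pd j (pd i f) x) < e"
      using cont(1) U e unfolding continuous_on_iff by blast
    obtain d2 where d2: "d2 > 0"
      "\<And>y. y \<in> U \<Longrightarrow> dist y x < d2 \<Longrightarrow> dist (pd i (pd j f) y) (pd i (pd j f) x) < e"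
      using cont(2) U e unfolding continuous_on_iff by blast
    obtain d3 where d3: "d3 > 0" "ball x d3 \<subseteq> U" using U open_contains_ball by blast
    define h where "h = min d1 (min d2 d3) / 3"
    have h: "h > 0" using d1 d2 d3 by (simp add: h_def)
    have near: "x + s *\<^sub>R axis k 1 + t *\<^sub>R axis l 1 \<in> U \<inter> ball x (min d1 (min d2 d3))"
      if "0 \<le> s" "s \<le> h" "0 \<le> t" "t \<le> h" for s t k l
      using axis_square_in_ball[of s t "min d1 (min d2 d3)" x k l] that h d3(2)
      by (auto simp: h_def)
    obtain s t where "0 < s" "s < h" "0 < t" "t < h" and E1:
      "f (x + h *\<^sub>R axis i 1 + h *\<^sub>R axis j 1) - f (x + h *\<^sub>R axis i 1) - f (x + h *\<^sub>R axis j 1) + f x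
         = h * h * pd j (pd i f) (x + s *\<^sub>R axis i 1 + t *\<^sub>R axis j 1)"
      using second_difference_mvt[OF h, of x i j U f] near df ddf by blast
    moreover obtain s' t' where "0 < s'" "s' < h" "0 < t'" "t' < h" and E2:
      "f (x + h *\<^sub>R axis j 1 + h *\<^sub>R axis i 1) - f (x + h *\<^sub>R axis j 1) - f (x + h *\<^sub>R axis i 1) + f x
         = h * h * pd i (pd j f) (x + s' *\<^sub>R axis j 1 + t' *\<^sub>R axis i 1)"
      using second_difference_mvt[OF h, of x j i U f] near df ddf by blast
    moreover have "pd j (pd i f) (x + s *\<^sub>R axis i 1 + t *\<^sub>R axis j 1)
        = pd i (pd j f) (x + s' *\<^sub>R axis j 1 + t' *\<^sub>R axis i 1)"
      using E1 E2 h by (simp add: algebra_simps)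
    ultimately show ?thesis
      using d1(2)[of "x + s *\<^sub>R axis i 1 + t *\<^sub>R axis j 1"] near[of s t i j]
        d2(2)[of "x + s' *\<^sub>R axis j 1 + t' *\<^sub>R axis i 1"] near[of s' t' j i]
      by (auto simp: dist_real_def dist_commute)
  qed
  show ?thesis
  proof (rule ccontr)
    assume "pd j (pd i f) x \<noteq> pd i (pd j f) x"
    then show False
      using close[of "\<bar>pd j (pd i f) x - pd i (pd j f) x\<bar> / 4"] by simp
  qed
qed

section \<open>Continuously differentiable fields\<close>

lemma C1_onD: "open U \<Longrightarrow> C1_on U F \<Longrightarrow> y \<in> U \<Longrightarrow> F differentiable (at y)"
  unfolding C1_on_def using differentiable_on_eq_differentiable_at by blast

lemma C1_on_imp_continuous_on: "C1_on U F \<Longrightarrow> continuous_on U F"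
  unfolding C1_on_def using differentiable_imp_continuous_on by blast

lemma C1_onI:
  assumes "open U" "\<And>y. y \<in> U \<Longrightarrow> F differentiable (at y)" "\<And>i. continuous_on U (pd i F)"
  shows "C1_on U F"
  unfolding C1_on_def using assms differentiable_on_eq_differentiable_at by blast

lemma C1_on_cong:
  assumes U: "open U" and eq: "\<And>y. y \<in> U \<Longrightarrow> f y = g y" and f: "C1_on U f"
  shows "C1_on U g"
proof (rule C1_onI[OF U])
  show "g differentiable (at y)" if "y \<in> U" for y
    using C1_onD[OF U f that] has_derivative_transform_within_open[of f _ y UNIV U g, OF _ U that eq]
    unfolding differentiable_def by blast
  have "continuous_on U (pd i f)" for i using f unfolding C1_on_def by blast
  then show "continuous_on U (pd i g)" for i
    by (rule continuous_on_cong[THEN iffD1, rotated 2]) (auto intro: pd_cong[OF U _ eq])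
qed

lemma C1_on_bilinear:
  fixes f :: "real^3 \<Rightarrow> 'a::real_normed_vector" and g :: "real^3 \<Rightarrow> 'b::real_normed_vector"
    and prod :: "'a \<Rightarrow> 'b \<Rightarrow> 'c::real_normed_vector"
  assumes bb: "bounded_bilinear prod" and U: "open U" and f: "C1_on U f" and g: "C1_on U g"
  shows "C1_on U (\<lambda>y. prod (f y) (g y))"
proof (rule C1_onI[OF U])
  show "(\<lambda>y. prod (f y) (g y)) differentiable (at y)" if "y \<in> U" for y
    using bounded_bilinear.FDERIV[OF bb C1_onD[OF U f that, unfolded frechet_derivative_works]
        C1_onD[OF U g that, unfolded frechet_derivative_works]]
    unfolding differentiable_def by blast
  have "continuous_on U (\<lambda>y. prod (f y) (pd i g y) + prod (pd i f y) (g y))" for i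
    using C1_on_imp_continuous_on[OF f] C1_on_imp_continuous_on[OF g] f g unfolding C1_on_def
    by (intro continuous_on_add bounded_bilinear.continuous_on[OF bb]) auto
  then show "continuous_on U (pd i (\<lambda>y. prod (f y) (g y)))" for i
    by (rule continuous_on_cong[THEN iffD1, rotated 2])
       (auto simp: pd_bilinear[OF bb C1_onD[OF U f] C1_onD[OF U g]])
qed

lemma C1_on_linear:
  fixes f :: "real^3 \<Rightarrow> 'a::real_normed_vector" and L :: "'a \<Rightarrow> 'b::real_normed_vector"
  assumes bl: "bounded_linear L" and U: "open U" and f: "C1_on U f"
  shows "C1_on U (\<lambda>y. L (f y))"
proof (rule C1_onI[OF U])
  show "(\<lambda>y. L (f y)) differentiable (at y)" if "y \<in> U" for y
    using bounded_linear.has_derivative[OF bl C1_onD[OF U f that, unfolded frechet_derivative_works]]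
    unfolding differentiable_def by blast
  have "continuous_on U (\<lambda>y. L (pd i f y))" for i
    using f unfolding C1_on_def by (intro bounded_linear.continuous_on[OF bl]) auto
  then show "continuous_on U (pd i (\<lambda>y. L (f y)))" for i
    by (rule continuous_on_cong[THEN iffD1, rotated 2]) (auto simp: pd_linear[OF bl C1_onD[OF U f]])
qed

lemma C1_on_const: "open U \<Longrightarrow> C1_on U (\<lambda>y. c)"
  by (rule C1_onI) (auto simp: pd_const)

lemma C1_on_add:
  assumes U: "open U" and f: "C1_on U f" and g: "C1_on U g"
  shows "C1_on U (\<lambda>y. f y + g y)"
proof (rule C1_onI[OF U])
  show "(\<lambda>y. f y + g y) differentiable (at y)" if "y \<in> U" for y
    using C1_onD[OF U f that] C1_onD[OF U g that] by (rule differentiable_add)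
  have "continuous_on U (\<lambda>y. pd i f y + pd i g y)" for i
    using f g unfolding C1_on_def by (intro continuous_on_add) auto
  then show "continuous_on U (pd i (\<lambda>y. f y + g y))" for i
    by (rule continuous_on_cong[THEN iffD1, rotated 2])
       (auto simp: pd_add[OF C1_onD[OF U f] C1_onD[OF U g]])
qed

lemma C1_on_minus:
  assumes "open U" "C1_on U f"
  shows "C1_on U (\<lambda>y. - f y)"
  using C1_on_linear[OF bounded_linear_minus[OF bounded_linear_ident] assms] by simp

lemma C1_on_diff:
  assumes U: "open U" and f: "C1_on U f" and g: "C1_on U g"
  shows "C1_on U (\<lambda>y. f y - g y)"
  using C1_on_add[OF U f C1_on_minus[OF U g]] by simp

lemma C1_on_mult:
  fixes f g :: "real^3 \<Rightarrow> real"
  shows "open U \<Longrightarrow> C1_on U f \<Longrightarrow> C1_on U g \<Longrightarrow> C1_on U (\<lambda>y. f y * g y)"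
  using C1_on_bilinear[OF bounded_bilinear_mult] .

lemma C1_on_scaleR:
  fixes f :: "real^3 \<Rightarrow> real" and g :: "real^3 \<Rightarrow> 'a::real_normed_vector"
  shows "open U \<Longrightarrow> C1_on U f \<Longrightarrow> C1_on U g \<Longrightarrow> C1_on U (\<lambda>y. f y *\<^sub>R g y)"
  using C1_on_bilinear[OF bounded_bilinear_scaleR] .

lemma C1_on_inner:
  fixes f g :: "real^3 \<Rightarrow> real^3"
  shows "open U \<Longrightarrow> C1_on U f \<Longrightarrow> C1_on U g \<Longrightarrow> C1_on U (\<lambda>y. f y \<bullet> g y)"
  using C1_on_bilinear[OF bounded_bilinear_inner] .

lemma bounded_bilinear_cross3: "bounded_bilinear cross3"
  using bilinear_cross bilinear_conv_bounded_bilinear by blast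

lemma C1_on_cross3:
  fixes f g :: "real^3 \<Rightarrow> real^3"
  shows "open U \<Longrightarrow> C1_on U f \<Longrightarrow> C1_on U g \<Longrightarrow> C1_on U (\<lambda>y. cross3 (f y) (g y))"
  using C1_on_bilinear[OF bounded_bilinear_cross3] .

lemma C1_on_vec_nth:
  fixes F :: "real^3 \<Rightarrow> real^3"
  shows "open U \<Longrightarrow> C1_on U F \<Longrightarrow> C1_on U (\<lambda>y. F y $ k)"
  using C1_on_linear[OF bounded_linear_vec_nth] .

lemma C1_on_componentwise:
  fixes F :: "real^3 \<Rightarrow> real^3"
  assumes U: "open U" and c: "\<And>k. C1_on U (\<lambda>y. F y $ k)"
  shows "C1_on U F"
proof -
  have "C1_on U (\<lambda>y. (F y $ 1) *\<^sub>R axis (1::3) (1::real) + (F y $ 2) *\<^sub>R axis 2 1 + (F y $ 3) *\<^sub>R axis 3 1)"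
    by (intro C1_on_add C1_on_scaleR C1_on_const c U)
  moreover have "(F y $ 1) *\<^sub>R axis (1::3) (1::real) + (F y $ 2) *\<^sub>R axis 2 1 + (F y $ 3) *\<^sub>R axis 3 1 = F y" for y
    by (simp add: vec_eq_iff axis_def forall_3)
  ultimately show ?thesis by simp
qed

lemma C1_on_compose:
  fixes f :: "real^3 \<Rightarrow> real" and \<phi> \<phi>' :: "real \<Rightarrow> real"
  assumes U: "open U" and f: "C1_on U f" and T: "\<And>y. y \<in> U \<Longrightarrow> f y \<in> T"
    and d: "\<And>s. s \<in> T \<Longrightarrow> (\<phi> has_real_derivative \<phi>' s) (at s)"
    and c: "continuous_on T \<phi>'"
  shows "C1_on U (\<lambda>y. \<phi> (f y))"
proof -
  have D: "((\<lambda>y. \<phi> (f y)) has_derivative (\<lambda>h. frechet_derivative f (at y) h * \<phi>' (f y))) (at y)"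
    if "y \<in> U" for y
    using DERIV_compose_FDERIV[OF d[OF T[OF that]] C1_onD[OF U f that, unfolded frechet_derivative_works]] .
  show ?thesis
  proof (rule C1_onI[OF U])
    show "(\<lambda>y. \<phi> (f y)) differentiable (at y)" if "y \<in> U" for y
      using D[OF that] unfolding differentiable_def by blast
    have "continuous_on U (\<lambda>y. pd i f y * \<phi>' (f y))" for i
      using f unfolding C1_on_def
      by (intro continuous_on_mult continuous_on_compose2[OF c C1_on_imp_continuous_on[OF f]])
         (auto simp: T)
    moreover have "pd i (\<lambda>y. \<phi> (f y)) y = pd i f y * \<phi>' (f y)" if "y \<in> U" for i y
      by (subst has_derivative_imp_pd[OF D[OF that]]) (simp add: pd_def)
    ultimately show "continuous_on U (pd i (\<lambda>y. \<phi> (f y)))" for i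
      using continuous_on_cong by (metis (no_types, lifting))
  qed
qed

section \<open>Identities of vector calculus\<close>

lemma divg_eq_sum_pd: "F differentiable (at x) \<Longrightarrow> divg F x = (\<Sum>i\<in>UNIV. pd i F x $ i)"
  by (simp add: divg_def pd_vec_nth)

lemma curl_eq_pd: "F differentiable (at x) \<Longrightarrow> curl F x =
   vector [pd 2 F x $ 3 - pd 3 F x $ 2, pd 3 F x $ 1 - pd 1 F x $ 3, pd 1 F x $ 2 - pd 2 F x $ 1]"
  by (simp add: curl_def pd_vec_nth)

lemma curl_cong: "open S \<Longrightarrow> x \<in> S \<Longrightarrow> (\<And>y. y \<in> S \<Longrightarrow> F y = G y) \<Longrightarrow> curl F x = curl G x"
  unfolding curl_def by (subst (1 2 3 4 5 6) pd_cong[of S x _ "\<lambda>y. G y $ _"]) auto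

lemma divg_cong: "open S \<Longrightarrow> x \<in> S \<Longrightarrow> (\<And>y. y \<in> S \<Longrightarrow> F y = G y) \<Longrightarrow> divg F x = divg G x"
  unfolding divg_def by (intro sum.cong refl pd_cong) auto

lemma grad_cong: "open S \<Longrightarrow> x \<in> S \<Longrightarrow> (\<And>y. y \<in> S \<Longrightarrow> F y = G y) \<Longrightarrow> grad F x = grad G x"
  unfolding grad_def by (simp add: pd_cong[of S x F G])

lemma divg_add:
  "F differentiable (at x) \<Longrightarrow> G differentiable (at x) \<Longrightarrow> divg (\<lambda>y. F y + G y) x = divg F x + divg G x"
  by (simp add: divg_eq_sum_pd pd_add sum.distrib)

lemma divg_diff:
  "F differentiable (at x) \<Longrightarrow> G differentiable (at x) \<Longrightarrow> divg (\<lambda>y. F y - G y) x = divg F x - divg G x"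
  by (simp add: divg_eq_sum_pd pd_diff sum_subtractf)

lemma divg_scaleR:
  fixes f :: "real^3 \<Rightarrow> real" and G :: "real^3 \<Rightarrow> real^3"
  assumes "f differentiable (at x)" "G differentiable (at x)"
  shows "divg (\<lambda>y. f y *\<^sub>R G y) x = f x * divg G x + grad f x \<bullet> G x"
  using assms
  by (simp add: divg_eq_sum_pd pd_scaleR sum.distrib grad_def inner_vec_def sum_distrib_left)

lemma divg_cross3:
  fixes G H :: "real^3 \<Rightarrow> real^3"
  assumes "G differentiable (at x)" "H differentiable (at x)"
  shows "divg (\<lambda>y. cross3 (G y) (H y)) x = H x \<bullet> curl G x - G x \<bullet> curl H x"
proof -
  have "(\<lambda>y. cross3 (G y) (H y)) differentiable (at x)"
    using bounded_bilinear.FDERIV[OF bounded_bilinear_cross3 assms[unfolded frechet_derivative_works]]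
    unfolding differentiable_def by blast
  then have "divg (\<lambda>y. cross3 (G y) (H y)) x
      = (\<Sum>i\<in>UNIV. (cross3 (G x) (pd i H x) + cross3 (pd i G x) (H x)) $ i)"
    by (simp add: divg_eq_sum_pd pd_bilinear[OF bounded_bilinear_cross3 assms])
  also have "\<dots> = H x \<bullet> curl G x - G x \<bullet> curl H x"
    using assms by (simp add: curl_eq_pd sum_3 inner_vec_def cross3_def algebra_simps)
  finally show ?thesis .
qed

lemma grad_minus: "f differentiable (at x) \<Longrightarrow> grad (\<lambda>y. - f y) x = - grad f x"
  by (simp add: grad_def pd_minus vec_eq_iff)

lemma grad_mult_const: "f differentiable (at x) \<Longrightarrow> grad (\<lambda>y. c * f y) x = c *\<^sub>R grad f x"
  by (simp add: grad_def pd_mult pd_const vec_eq_iff)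

lemma grad_const: "grad (\<lambda>y. c) x = 0"
  by (simp add: grad_def pd_const vec_eq_iff)

lemma curl_scaleR_const: "F differentiable (at x) \<Longrightarrow> curl (\<lambda>y. c *\<^sub>R F y) x = c *\<^sub>R curl F x"
  by (simp add: curl_eq_pd pd_scaleR_right algebra_simps vec_eq_iff forall_3)

lemma gyro_mult_eq_cross3: "gyro w *v b = cross3 w b"
  by (simp add: gyro_def cross3_def matrix_vector_mult_def vec_eq_iff forall_3 sum_3)

lemma tau_nth_nth:
  "tau \<mu> \<kappa> v y $ k $ j = -(\<mu> * (pd j (\<lambda>z. v z $ k) y + pd k (\<lambda>z. v z $ j) y))
     + ((2/3)*\<mu> - \<kappa>) * (of_bool (k = j) * (\<Sum>m\<in>UNIV. pd m (\<lambda>z. v z $ m) y))"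
  by (simp add: tau_def Grad_def transpose_def mat_def divg_def algebra_simps)

context
  fixes U :: "(real^3) set" and v :: "real^3 \<Rightarrow> real^3"
  assumes U: "open U" and v: "C2_on U v"
begin

lemma C2_on_imp_C1_on: "C1_on U v"
  using v unfolding C2_on_def by blast

lemma C1_on_pd_component: "C1_on U (pd j (\<lambda>y. v y $ k))"
proof -
  have "C1_on U (\<lambda>y. pd j v y $ k)"
    using C1_on_vec_nth[OF U] v unfolding C2_on_def by blast
  moreover have "pd j v y $ k = pd j (\<lambda>y. v y $ k) y" if "y \<in> U" for y
    using pd_vec_nth[OF C1_onD[OF U C2_on_imp_C1_on that]] by simp
  ultimately show ?thesis using C1_on_cong[OF U] by metis
qed

lemma pd_pd_component_commute:
  "y \<in> U \<Longrightarrow> pd i (pd j (\<lambda>y. v y $ k)) y = pd j (pd i (\<lambda>y. v y $ k)) y"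
  using C1_on_vec_nth[OF U C2_on_imp_C1_on] C1_on_pd_component
  by (intro pd_pd_commute[OF U]) (auto simp: C1_on_def C1_onD[OF U])

lemma Div_tau:
  assumes x: "x \<in> U"
  shows "Div (tau \<mu> \<kappa> v) x = \<mu> *\<^sub>R curl (curl v) x - ((4/3) * \<mu> + \<kappa>) *\<^sub>R grad (divg v) x"
proof -
  note d = C1_onD[OF U C1_on_pd_component x]
  have Div_entry: "pd j (\<lambda>y. tau \<mu> \<kappa> v y $ k $ j) x =
     -(\<mu> * (pd j (pd j (\<lambda>z. v z $ k)) x + pd j (pd k (\<lambda>z. v z $ j)) x))
     + ((2/3)*\<mu> - \<kappa>) * (of_bool (k = j) * (\<Sum>m\<in>UNIV. pd j (pd m (\<lambda>z. v z $ m)) x))" for j k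
    unfolding tau_nth_nth by (simp add: pd_add pd_diff pd_minus pd_mult pd_const pd_sum d)
  have curl_nth: "(\<lambda>y. curl v y $ 1) = (\<lambda>y. pd 2 (\<lambda>z. v z $ 3) y - pd 3 (\<lambda>z. v z $ 2) y)"
    "(\<lambda>y. curl v y $ 2) = (\<lambda>y. pd 3 (\<lambda>z. v z $ 1) y - pd 1 (\<lambda>z. v z $ 3) y)"
    "(\<lambda>y. curl v y $ 3) = (\<lambda>y. pd 1 (\<lambda>z. v z $ 2) y - pd 2 (\<lambda>z. v z $ 1) y)"
    by (simp_all add: curl_def)
  show ?thesis
    unfolding vec_eq_iff forall_3
    by (simp add: Div_def Div_entry curl_def[of "curl v"] curl_nth grad_def divg_def[abs_def]
        pd_sum pd_add pd_diff d sum_3 pd_pd_component_commute[OF x] algebra_simps)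
qed

lemma C1_on_curl: "C1_on U (curl v)"
proof (rule C1_on_componentwise[OF U])
  show "C1_on U (\<lambda>y. curl v y $ k)" for k
    using exhaust_3[of k] by (auto simp: curl_def intro!: C1_on_diff[OF U] C1_on_pd_component)
qed

lemma C1_on_divg: "C1_on U (divg v)"
  using C1_on_pd_component by (simp add: divg_def[abs_def] sum_3 C1_on_add[OF U])

end

lemma continuous_on_divg: "open U \<Longrightarrow> C1_on U F \<Longrightarrow> continuous_on U (divg F)"
  unfolding C1_on_def
  by (rule continuous_on_cong[THEN iffD1, rotated 2, of _ "\<lambda>y. \<Sum>i\<in>UNIV. pd i F y $ i"])
     (auto intro!: continuous_intros simp: divg_eq_sum_pd differentiable_on_eq_differentiable_at)

section \<open>Differentiation under the integral sign\<close>

lemma continuous_on_slice: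
  assumes "continuous_on (T \<times> U) (\<lambda>(t, x). g t x)" "t \<in> T" "V \<subseteq> U"
  shows "continuous_on V (g t)"
  using continuous_on_subset[OF continuous_on_o_Pair[OF assms(1,2)] assms(3)] by (simp add: o_def)

lemma continuous_on_imp_integrable_on:
  fixes g :: "'a::euclidean_space \<Rightarrow> real"
  assumes K: "compact K" and SK: "S \<subseteq> K" and S: "S \<in> lmeasurable" and c: "continuous_on K g"
  shows "g integrable_on S"
proof -
  obtain B where B: "\<And>x. x \<in> K \<Longrightarrow> norm (g x) \<le> B"
    using compact_imp_bounded[OF compact_continuous_image[OF c K]] unfolding bounded_iff by blast
  show ?thesis
  proof (rule measurable_bounded_by_integrable_imp_integrable_real)
    show "g \<in> borel_measurable (lebesgue_on S)"
      by (rule continuous_imp_measurable_on_sets_lebesgue[OF continuous_on_subset[OF c SK]])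
         (use S in auto)
    show "(\<lambda>x. B) integrable_on S" using integrable_on_const[OF S] .
  qed (use B SK S in auto)
qed

lemma linearization_error_bound:
  fixes g g' :: "real \<Rightarrow> real"
  assumes g': "\<And>\<tau>. \<tau> \<in> ball t0 s \<Longrightarrow> (g has_real_derivative g' \<tau>) (at \<tau>)"
    and close: "\<And>\<tau>. \<tau> \<in> ball t0 s \<Longrightarrow> \<bar>g' \<tau> - g' t0\<bar> \<le> e"
    and t: "t \<in> ball t0 s"
  shows "\<bar>g t - g t0 - (t - t0) * g' t0\<bar> \<le> \<bar>t - t0\<bar> * e"
proof -
  have "t0 \<in> ball t0 s" using t by (auto simp: dist_real_def)
  have "norm (g t - g t0 - (t - t0) *\<^sub>R g' t0) \<le> norm (t - t0) * e"
  proof (rule vector_differentiable_bound_linearization[where f = g and f' = g' and S = "ball t0 s"])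
    show "(g has_vector_derivative g' \<tau>) (at \<tau> within ball t0 s)" if "\<tau> \<in> ball t0 s" for \<tau>
      using g'[OF that]
      by (simp add: has_real_derivative_iff_has_vector_derivative[symmetric] has_field_derivative_at_within)
    show "closed_segment t0 t \<subseteq> ball t0 s"
      using \<open>t0 \<in> ball t0 s\<close> t by (intro closed_segment_subset) auto
  qed (use close \<open>t0 \<in> ball t0 s\<close> in auto)
  then show ?thesis by simp
qed

lemma has_real_derivative_integral:
  fixes f f' :: "real \<Rightarrow> 'a::euclidean_space \<Rightarrow> real"
  assumes K: "compact K" and SK: "S \<subseteq> K" and S: "S \<in> lmeasurable"
    and T: "open T" "t0 \<in> T"
    and f': "\<And>t x. t \<in> T \<Longrightarrow> x \<in> K \<Longrightarrow> ((\<lambda>s. f s x) has_real_derivative f' t x) (at t)"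
    and f_cont: "\<And>t. t \<in> T \<Longrightarrow> continuous_on K (f t)"
    and f'_cont: "continuous_on (T \<times> K) (\<lambda>(t, x). f' t x)"
  shows "((\<lambda>t. integral S (f t)) has_real_derivative integral S (f' t0)) (at t0)"
proof -
  have int_f: "f t integrable_on S" if "t \<in> T" for t
    using continuous_on_imp_integrable_on[OF K SK S f_cont[OF that]] .
  have int_f': "f' t0 integrable_on S"
    using continuous_on_imp_integrable_on[OF K SK S continuous_on_slice[OF f'_cont T(2) order_refl]] .
  define M where "M = integral S (\<lambda>x. 1::real)"
  have "M \<ge> 0" unfolding M_def by (rule integral_nonneg) (auto intro: integrable_on_const[OF S])
  show ?thesis
    unfolding has_field_derivative_iff LIM_eq
  proof (intro allI impI)
    fix r :: real assume "r > 0"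
    define e where "e = r / (M + 1)"
    have "e > 0" "e * M < r"
      using \<open>r > 0\<close> \<open>M \<ge> 0\<close> by (auto simp: e_def field_simps)
    obtain X0 where "t0 \<in> X0" "open X0" and close: "\<forall>t\<in>X0 \<inter> T. \<forall>x\<in>K. dist (f' t x) (f' t0 x) \<le> e"
      using continuous_on_prod_compactE[OF f'_cont K T(2) \<open>e > 0\<close>] by auto
    obtain s where "s > 0" and s: "ball t0 s \<subseteq> X0 \<inter> T"
      using openE[OF open_Int[OF \<open>open X0\<close> T(1)]] \<open>t0 \<in> X0\<close> T(2) by blast
    show "\<exists>s>0. \<forall>t. t \<noteq> t0 \<and> norm (t - t0) < s \<longrightarrow>
        norm ((integral S (f t) - integral S (f t0)) / (t - t0) - integral S (f' t0)) < r"
    proof (intro exI[of _ s] conjI allI impI \<open>s > 0\<close>)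
      fix t assume t: "t \<noteq> t0 \<and> norm (t - t0) < s"
      then have "t \<in> ball t0 s" by (simp add: dist_real_def abs_minus_commute)
      have "t \<in> T" using \<open>t \<in> ball t0 s\<close> s by blast
      have linearization: "norm (f t x - f t0 x - (t - t0) * f' t0 x) \<le> norm (t - t0) * e"
        if "x \<in> K" for x
        using linearization_error_bound[of t0 s "\<lambda>\<tau>. f \<tau> x" "\<lambda>\<tau>. f' \<tau> x" e t]
          f' close s \<open>t \<in> ball t0 s\<close> \<open>x \<in> K\<close> by (auto simp: dist_norm subset_iff)
      have int_lin: "(\<lambda>x. f t x - f t0 x - (t - t0) * f' t0 x) integrable_on S"
        using int_f[OF \<open>t \<in> T\<close>] int_f[OF T(2)] int_f'
        by (intro integrable_diff integrable_on_mult_right)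
      have "integral S (\<lambda>x. f t x - f t0 x - (t - t0) * f' t0 x)
          = integral S (f t) - integral S (f t0) - (t - t0) * integral S (f' t0)"
        using int_f[OF \<open>t \<in> T\<close>] int_f[OF T(2)] int_f'
        by (simp add: integral_diff integrable_diff integrable_on_mult_right)
      then have "norm ((integral S (f t) - integral S (f t0)) / (t - t0) - integral S (f' t0))
          = norm (integral S (\<lambda>x. f t x - f t0 x - (t - t0) * f' t0 x)) / norm (t - t0)"
        using t by (simp add: field_simps)
      also have "\<dots> \<le> integral S (\<lambda>x. norm (t - t0) * e) / norm (t - t0)"
        using linearization SK int_lin integrable_on_const[OF S]
        by (intro divide_right_mono integral_norm_bound_integral) auto
      also have "\<dots> = e * M"
        using t integral_mult_right[of S "norm (t - t0) * e" "\<lambda>x. 1"]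
        by (simp add: M_def del: integral_mult_right integral_mult_left)
      finally show "norm ((integral S (f t) - integral S (f t0)) / (t - t0) - integral S (f' t0)) < r"
        using \<open>e * M < r\<close> by linarith
    qed
  qed
qed

section \<open>The port-Hamiltonian operator\<close>

lemma fst_pH_rhs: "fst (pH_rhs r \<omega> \<mu> \<kappa> (E, e)) x = - divg e x"
  by (simp add: pH_rhs_def J_op_def G_adj_full_def Let_def)

lemma snd_pH_rhs:
  "snd (pH_rhs r \<omega> \<mu> \<kappa> (E, e)) x
    = - grad E x - (1 / r x) *\<^sub>R (gyro (\<omega> x) *v e x)
      - (1 / r x) *\<^sub>R (curl (\<lambda>y. \<mu> *\<^sub>R Gr r e y) x - grad (\<lambda>y. ((4/3) * \<mu> + \<kappa>) * Gd r e y) x)"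
  by (simp add: pH_rhs_def J_op_def G_adj_full_def S_full_def G_full_def G_tau_adj_def S_tau_def
      G_tau_def Gr_adj_def Gd_adj_def Let_def scaleR_diff_right)

lemma snd_pH_rhs_eq_momentum_rhs:
  fixes r E :: "real^3 \<Rightarrow> real" and w :: "real^3 \<Rightarrow> real^3"
  assumes U: "open U" "x \<in> U" and r: "\<And>y. y \<in> U \<Longrightarrow> r y \<noteq> 0" and w: "C2_on U w"
  shows "snd (pH_rhs r (curl w) \<mu> \<kappa> (E, \<lambda>y. r y *\<^sub>R w y)) x
      = - grad E x - (1 / r x) *\<^sub>R (gyro (curl w x) *v (r x *\<^sub>R w x)) - (1 / r x) *\<^sub>R Div (tau \<mu> \<kappa> w) x"
proof -
  have Gr: "Gr r (\<lambda>y. r y *\<^sub>R w y) y = curl w y" if "y \<in> U" for y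
    unfolding Gr_def by (rule curl_cong[OF U(1) that]) (simp add: r)
  have Gd: "Gd r (\<lambda>y. r y *\<^sub>R w y) y = divg w y" if "y \<in> U" for y
    unfolding Gd_def by (rule divg_cong[OF U(1) that]) (simp add: r)
  have "curl (\<lambda>y. \<mu> *\<^sub>R Gr r (\<lambda>y. r y *\<^sub>R w y) y) x = curl (\<lambda>y. \<mu> *\<^sub>R curl w y) x"
    using Gr by (intro curl_cong[OF U]) simp
  also have "\<dots> = \<mu> *\<^sub>R curl (curl w) x"
    using curl_scaleR_const[OF C1_onD[OF U(1) C1_on_curl[OF U(1) w] U(2)]] .
  finally have curl_Gr: "curl (\<lambda>y. \<mu> *\<^sub>R Gr r (\<lambda>y. r y *\<^sub>R w y) y) x = \<mu> *\<^sub>R curl (curl w) x" .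
  have "grad (\<lambda>y. ((4/3) * \<mu> + \<kappa>) * Gd r (\<lambda>y. r y *\<^sub>R w y) y) x
      = grad (\<lambda>y. ((4/3) * \<mu> + \<kappa>) * divg w y) x"
    using Gd by (intro grad_cong[OF U]) simp
  also have "\<dots> = ((4/3) * \<mu> + \<kappa>) *\<^sub>R grad (divg w) x"
    using grad_mult_const[OF C1_onD[OF U(1) C1_on_divg[OF U(1) w] U(2)]] .
  finally show ?thesis
    unfolding snd_pH_rhs curl_Gr Div_tau[OF U(1) w U(2)] by simp
qed

section \<open>Energy balance\<close>

definition energy_flux ::
  "real \<Rightarrow> real \<Rightarrow> (real^3 \<Rightarrow> real) \<Rightarrow> (real^3 \<Rightarrow> real^3) \<Rightarrow> (real^3 \<Rightarrow> real) \<Rightarrow> real^3 \<Rightarrow> real^3"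
  where "energy_flux \<mu> \<kappa> r w E y =
    (- E y) *\<^sub>R (r y *\<^sub>R w y) - \<mu> *\<^sub>R cross3 (curl w y) (w y) + (((4/3) * \<mu> + \<kappa>) * divg w y) *\<^sub>R w y"

lemma C1_on_energy_flux:
  assumes "open U" "C1_on U r" "C2_on U w" "C1_on U E"
  shows "C1_on U (energy_flux \<mu> \<kappa> r w E)"
  unfolding energy_flux_def[abs_def] using assms
  by (intro C1_on_add C1_on_diff C1_on_scaleR C1_on_minus C1_on_const C1_on_cross3 C1_on_mult
      C1_on_curl C1_on_divg C2_on_imp_C1_on)

lemma divg_energy_flux:
  fixes r E :: "real^3 \<Rightarrow> real" and w :: "real^3 \<Rightarrow> real^3"
  assumes U: "open U" "x \<in> U" and r: "C1_on U r" and w: "C2_on U w" and E: "C1_on U E"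
  shows "divg (energy_flux \<mu> \<kappa> r w E) x
    = - E x * divg (\<lambda>y. r y *\<^sub>R w y) x - grad E x \<bullet> (r x *\<^sub>R w x)
      - \<mu> * (w x \<bullet> curl (curl w) x - curl w x \<bullet> curl w x)
      + ((4/3) * \<mu> + \<kappa>) * (divg w x * divg w x + grad (divg w) x \<bullet> w x)"
proof -
  define c where "c = (4/3) * \<mu> + \<kappa>"
  have w1: "C1_on U w" using C2_on_imp_C1_on[OF U(1) w] .
  have C1: "C1_on U (\<lambda>y. (- E y) *\<^sub>R (r y *\<^sub>R w y))" "C1_on U (\<lambda>y. \<mu> *\<^sub>R cross3 (curl w y) (w y))"
    "C1_on U (\<lambda>y. (c * divg w y) *\<^sub>R w y)" "C1_on U (\<lambda>y. r y *\<^sub>R w y)"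
    using U(1) r w1 E C1_on_curl[OF U(1) w] C1_on_divg[OF U(1) w]
    by (auto intro!: C1_on_scaleR C1_on_minus C1_on_const C1_on_cross3 C1_on_mult)
  note d = C1_onD[OF U(1) _ U(2)]
  have "divg (energy_flux \<mu> \<kappa> r w E) x
      = divg (\<lambda>y. (- E y) *\<^sub>R (r y *\<^sub>R w y)) x - divg (\<lambda>y. \<mu> *\<^sub>R cross3 (curl w y) (w y)) x
        + divg (\<lambda>y. (c * divg w y) *\<^sub>R w y) x"
    unfolding energy_flux_def[abs_def] c_def[symmetric]
    using C1 by (simp add: divg_add divg_diff differentiable_diff d)
  also have "divg (\<lambda>y. (- E y) *\<^sub>R (r y *\<^sub>R w y)) x
      = - E x * divg (\<lambda>y. r y *\<^sub>R w y) x - grad E x \<bullet> (r x *\<^sub>R w x)"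
  proof -
    have "divg (\<lambda>y. (- E y) *\<^sub>R (r y *\<^sub>R w y)) x
        = - E x * divg (\<lambda>y. r y *\<^sub>R w y) x + grad (\<lambda>y. - E y) x \<bullet> (r x *\<^sub>R w x)"
      by (rule divg_scaleR) (use d E C1(4) in \<open>auto intro: differentiable_minus\<close>)
    then show ?thesis using grad_minus[OF d[OF E]] by simp
  qed
  also have "divg (\<lambda>y. \<mu> *\<^sub>R cross3 (curl w y) (w y)) x
      = \<mu> * (w x \<bullet> curl (curl w) x - curl w x \<bullet> curl w x)"
    using divg_scaleR[of "\<lambda>y. \<mu>" x "\<lambda>y. cross3 (curl w y) (w y)"] grad_const
      divg_cross3[OF d[OF C1_on_curl[OF U(1) w]] d[OF w1]]
      d[OF C1_on_cross3[OF U(1) C1_on_curl[OF U(1) w] w1]] by simp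
  also have "divg (\<lambda>y. (c * divg w y) *\<^sub>R w y) x
      = c * divg w x * divg w x + c * (grad (divg w) x \<bullet> w x)"
    using divg_scaleR[OF d[OF C1_on_mult[OF U(1) C1_on_const[OF U(1)] C1_on_divg[OF U(1) w]]] d[OF w1]]
      grad_mult_const[OF d[OF C1_on_divg[OF U(1) w]]] by simp
  finally show ?thesis by (simp add: c_def algebra_simps)
qed

lemma energy_rate_eq_divg_energy_flux:
  fixes r E :: "real^3 \<Rightarrow> real" and w :: "real^3 \<Rightarrow> real^3"
  assumes U: "open U" "x \<in> U" and r: "C1_on U r" "r x \<noteq> 0" and w: "C2_on U w" and E: "C1_on U E"
  shows "- divg (\<lambda>y. r y *\<^sub>R w y) x * E x + (r x *\<^sub>R w x) \<bullet>
      (- grad E x - (1 / r x) *\<^sub>R (gyro (curl w x) *v (r x *\<^sub>R w x)) - (1 / r x) *\<^sub>R Div (tau \<mu> \<kappa> w) x)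
    = divg (energy_flux \<mu> \<kappa> r w E) x
      - (\<mu> * (curl w x \<bullet> curl w x) + ((4/3) * \<mu> + \<kappa>) * (divg w x)\<^sup>2)"
proof -
  have "(r x *\<^sub>R w x) \<bullet> ((1 / r x) *\<^sub>R (gyro (curl w x) *v (r x *\<^sub>R w x))) = 0"
    by (simp add: gyro_mult_eq_cross3 dot_cross_self)
  moreover have "(r x *\<^sub>R w x) \<bullet> ((1 / r x) *\<^sub>R Div (tau \<mu> \<kappa> w) x)
      = \<mu> * (w x \<bullet> curl (curl w) x) - ((4/3) * \<mu> + \<kappa>) * (w x \<bullet> grad (divg w) x)"
    using r(2) by (simp add: Div_tau[OF U(1) w U(2)] inner_diff_right field_simps)
  ultimately have "(r x *\<^sub>R w x) \<bullet>
      (- grad E x - (1 / r x) *\<^sub>R (gyro (curl w x) *v (r x *\<^sub>R w x)) - (1 / r x) *\<^sub>R Div (tau \<mu> \<kappa> w) x)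
    = - (r x * (w x \<bullet> grad E x))
      - (\<mu> * (w x \<bullet> curl (curl w) x) - ((4/3) * \<mu> + \<kappa>) * (w x \<bullet> grad (divg w) x))"
    by (simp only: inner_diff_right inner_minus_right inner_scaleR_left diff_zero)
  then show ?thesis
    unfolding divg_energy_flux[OF U r(1) w E]
    by (simp add: inner_commute power2_eq_square algebra_simps)
qed

lemma inner_energy_flux_eq:
  assumes "curl w x = 0" "r x \<noteq> 0"
  shows "energy_flux \<mu> \<kappa> r w E x \<bullet> \<nu>
    = (E x - ((4/3) * \<mu> + \<kappa>) * divg w x / r x) * (- ((r x *\<^sub>R w x) \<bullet> \<nu>))"
  using assms by (simp add: energy_flux_def inner_diff_left inner_add_left field_simps)

lemma C1_on_total_enthalpy:
  fixes r :: "real^3 \<Rightarrow> real" and w :: "real^3 \<Rightarrow> real^3"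
  assumes U: "open U" and r: "C1_on U r" "\<And>y. y \<in> U \<Longrightarrow> r y > 0" and w: "C1_on U w"
    and p: "\<And>s. s > 0 \<Longrightarrow> (p has_real_derivative p' s) (at s)" "continuous_on {0<..} p'"
    and u: "\<And>s. s > 0 \<Longrightarrow> (u has_real_derivative p s / s\<^sup>2) (at s)"
  shows "C1_on U (\<lambda>y. (1/2) * (w y \<bullet> w y) + (u (r y) + p (r y) / r y))"
proof -
  have "continuous_on {0<..} p"
    using p(1) by (meson DERIV_isCont continuous_at_imp_continuous_on greaterThan_iff)
  then have "C1_on U (\<lambda>y. u (r y))"
    by (intro C1_on_compose[OF U r(1), of "{0<..}" u "\<lambda>s. p s / s\<^sup>2"])
       (auto intro!: continuous_intros simp: r(2) u)
  moreover have "C1_on U (\<lambda>y. p (r y))"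
    by (rule C1_on_compose[OF U r(1), of "{0<..}" p p']) (use r(2) p in auto)
  moreover have "C1_on U (\<lambda>y. 1 / r y)"
    by (rule C1_on_compose[OF U r(1), of "{0<..}" "\<lambda>s. 1 / s" "\<lambda>s. - (1 / s\<^sup>2)"])
       (auto intro!: derivative_eq_intros continuous_intros simp: r(2) power2_eq_square)
  ultimately have "C1_on U (\<lambda>y. (1/2) * (w y \<bullet> w y) + (u (r y) + p (r y) * (1 / r y)))"
    by (intro C1_on_add[OF U] C1_on_mult[OF U] C1_on_const[OF U] C1_on_inner[OF U] w)
  then show ?thesis by simp
qed

lemma integral_energy_flux_boundary:
  assumes bdry: "gauss_boundary \<Omega> \<sigma> n" and U: "open U" "closure \<Omega> \<subseteq> U"
    and r: "\<And>y. y \<in> U \<Longrightarrow> r y > 0" and vort: "\<And>x. x \<in> frontier \<Omega> \<Longrightarrow> curl w x = 0"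
  shows "(\<integral>x. energy_flux \<mu> \<kappa> r w E x \<bullet> n x \<partial>\<sigma>)
    = (\<integral>x. (E x - ((4/3) * \<mu> + \<kappa>) * divg (\<lambda>y. (r y *\<^sub>R w y) /\<^sub>R r y) x / r x)
          * (- ((r x *\<^sub>R w x) \<bullet> n x)) \<partial>\<sigma>)"
proof (rule Bochner_Integration.integral_cong[OF refl])
  fix x assume "x \<in> space \<sigma>"
  then have "x \<in> frontier \<Omega>" using bdry unfolding gauss_boundary_def by blast
  moreover from this have "x \<in> U" using U(2) by (auto simp: frontier_def)
  moreover from this have "divg (\<lambda>y. (r y *\<^sub>R w y) /\<^sub>R r y) x = divg w x"
    using r by (intro divg_cong[OF U(1)]) (auto simp: less_imp_neq[symmetric])
  ultimately show "energy_flux \<mu> \<kappa> r w E x \<bullet> n x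
      = (E x - ((4/3) * \<mu> + \<kappa>) * divg (\<lambda>y. (r y *\<^sub>R w y) /\<^sub>R r y) x / r x)
        * (- ((r x *\<^sub>R w x) \<bullet> n x))"
    using vort r[OF \<open>x \<in> U\<close>] by (simp add: inner_energy_flux_eq)
qed

lemma energy_rate_le_boundary_flux:
  fixes \<Omega> U :: "(real^3) set" and r rt E :: "real^3 \<Rightarrow> real" and w wt :: "real^3 \<Rightarrow> real^3"
  assumes \<Omega>: "open \<Omega>" "bounded \<Omega>" and bdry: "gauss_boundary \<Omega> \<sigma> n"
    and U: "open U" "closure \<Omega> \<subseteq> U" and visc: "\<mu> \<ge> 0" "\<kappa> \<ge> 0"
    and r: "C1_on U r" "\<And>y. y \<in> U \<Longrightarrow> r y > 0" and w: "C2_on U w" and E: "C1_on U E"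
    and cont: "continuous_on (closure \<Omega>) rt" "continuous_on (closure \<Omega>) wt"
    and mass: "\<And>x. x \<in> \<Omega> \<Longrightarrow> rt x = - divg (\<lambda>y. r y *\<^sub>R w y) x"
    and momentum: "\<And>x. x \<in> \<Omega> \<Longrightarrow> wt x = - grad E x
        - (1 / r x) *\<^sub>R (gyro (curl w x) *v (r x *\<^sub>R w x)) - (1 / r x) *\<^sub>R Div (tau \<mu> \<kappa> w) x"
    and vort: "\<And>x. x \<in> frontier \<Omega> \<Longrightarrow> curl w x = 0"
  shows "integral \<Omega> (\<lambda>x. rt x * E x + (r x *\<^sub>R w x) \<bullet> wt x)
    \<le> (\<integral>x. (E x - ((4/3) * \<mu> + \<kappa>) * divg (\<lambda>y. (r y *\<^sub>R w y) /\<^sub>R r y) x / r x)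
          * (- ((r x *\<^sub>R w x) \<bullet> n x)) \<partial>\<sigma>)"
proof -
  define F where "F = energy_flux \<mu> \<kappa> r w E"
  have F: "C1_on U F" unfolding F_def using C1_on_energy_flux U(1) r(1) w E .
  have K: "compact (closure \<Omega>)" using \<Omega>(2) by (simp add: compact_closure)
  note integrable = continuous_on_imp_integrable_on[OF K closure_subset lmeasurable_open[OF \<Omega>(2,1)]]
  have "continuous_on (closure \<Omega>) r" "continuous_on (closure \<Omega>) w" "continuous_on (closure \<Omega>) E"
    using r(1) C2_on_imp_C1_on[OF U(1) w] E
    by (auto intro: continuous_on_subset[OF C1_on_imp_continuous_on U(2)])
  then have "(\<lambda>x. rt x * E x + (r x *\<^sub>R w x) \<bullet> wt x) integrable_on \<Omega>"
    using cont by (intro integrable) (auto intro!: continuous_intros)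
  moreover have "divg F integrable_on \<Omega>"
    by (intro integrable continuous_on_subset[OF continuous_on_divg[OF U(1) F] U(2)])
  moreover have "rt x * E x + (r x *\<^sub>R w x) \<bullet> wt x \<le> divg F x" if "x \<in> \<Omega>" for x
  proof -
    have "x \<in> U" using that U(2) closure_subset by blast
    have "rt x * E x + (r x *\<^sub>R w x) \<bullet> wt x
        = divg F x - (\<mu> * (curl w x \<bullet> curl w x) + ((4/3) * \<mu> + \<kappa>) * (divg w x)\<^sup>2)"
      unfolding mass[OF that] momentum[OF that] F_def
      using r(2)[OF \<open>x \<in> U\<close>] by (intro energy_rate_eq_divg_energy_flux[OF U(1) \<open>x \<in> U\<close> r(1) _ w E]) simp
    moreover have "0 \<le> \<mu> * (curl w x \<bullet> curl w x) + ((4/3) * \<mu> + \<kappa>) * (divg w x)\<^sup>2"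
      using visc by simp
    ultimately show ?thesis by linarith
  qed
  ultimately have "integral \<Omega> (\<lambda>x. rt x * E x + (r x *\<^sub>R w x) \<bullet> wt x) \<le> integral \<Omega> (divg F)"
    by (rule integral_le)
  also have "\<dots> = (\<integral>x. F x \<bullet> n x \<partial>\<sigma>)"
    using bdry U F unfolding gauss_boundary_def by blast
  also have "\<dots> = (\<integral>x. (E x - ((4/3) * \<mu> + \<kappa>) * divg (\<lambda>y. (r y *\<^sub>R w y) /\<^sub>R r y) x / r x)
          * (- ((r x *\<^sub>R w x) \<bullet> n x)) \<partial>\<sigma>)"
    unfolding F_def using bdry U r(2) vort by (rule integral_energy_flux_boundary)
  finally show ?thesis .
qed

lemma energy_density_has_real_derivative:
  fixes r :: "real \<Rightarrow> real" and w :: "real \<Rightarrow> 'a::real_inner"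
  assumes r: "(r has_real_derivative r') (at t)" and w: "(w has_vector_derivative w') (at t)"
    and pos: "r t > 0" and u: "(u has_real_derivative p (r t) / (r t)\<^sup>2) (at (r t))"
  shows "((\<lambda>s. (1/2) * r s * (w s \<bullet> w s) + r s * u (r s)) has_real_derivative
      r' * ((1/2) * (w t \<bullet> w t) + (u (r t) + p (r t) / r t)) + (r t *\<^sub>R w t) \<bullet> w') (at t)"
proof -
  note w' = w[unfolded has_vector_derivative_def]
  have ww: "((\<lambda>s. w s \<bullet> w s) has_real_derivative 2 * (w t \<bullet> w')) (at t)"
    unfolding has_field_derivative_def
    by (rule has_derivative_eq_rhs[OF has_derivative_inner[OF w' w']])
       (auto simp: fun_eq_iff inner_commute algebra_simps)
  show ?thesis
    using pos
    by (auto intro!: derivative_eq_intros ww r DERIV_chain2[OF u r]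
        simp: field_simps power2_eq_square)
qed

lemma total_energy_has_real_derivative:
  fixes \<Omega> U :: "'a::euclidean_space set" and I :: "real set" and u p :: "real \<Rightarrow> real"
    and \<rho> \<rho>_t :: "real \<Rightarrow> 'a \<Rightarrow> real" and v v_t :: "real \<Rightarrow> 'a \<Rightarrow> 'b::real_inner"
  assumes \<Omega>: "bounded \<Omega>" "\<Omega> \<in> lmeasurable" "closure \<Omega> \<subseteq> U" and I: "open I" "t0 \<in> I"
    and pos: "\<And>t x. t \<in> I \<Longrightarrow> x \<in> U \<Longrightarrow> \<rho> t x > 0"
    and p: "continuous_on {0<..} p" and u: "\<And>s. s > 0 \<Longrightarrow> (u has_real_derivative p s / s\<^sup>2) (at s)"
    and \<rho>_t: "\<And>t x. t \<in> I \<Longrightarrow> x \<in> U \<Longrightarrow> ((\<lambda>s. \<rho> s x) has_real_derivative \<rho>_t t x) (at t)"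
    and v_t: "\<And>t x. t \<in> I \<Longrightarrow> x \<in> U \<Longrightarrow> ((\<lambda>s. v s x) has_vector_derivative v_t t x) (at t)"
    and cont: "continuous_on (I \<times> U) (\<lambda>(t, x). \<rho> t x)" "continuous_on (I \<times> U) (\<lambda>(t, x). v t x)"
      "continuous_on (I \<times> U) (\<lambda>(t, x). \<rho>_t t x)" "continuous_on (I \<times> U) (\<lambda>(t, x). v_t t x)"
  shows "((\<lambda>t. integral \<Omega> (\<lambda>x. (1/2) * \<rho> t x * (v t x \<bullet> v t x) + \<rho> t x * u (\<rho> t x)))
    has_real_derivative integral \<Omega> (\<lambda>x. \<rho>_t t0 x * ((1/2) * (v t0 x \<bullet> v t0 x)
      + (u (\<rho> t0 x) + p (\<rho> t0 x) / \<rho> t0 x)) + (\<rho> t0 x *\<^sub>R v t0 x) \<bullet> v_t t0 x)) (at t0)"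
proof -
  define f where "f t x = (1/2) * \<rho> t x * (v t x \<bullet> v t x) + \<rho> t x * u (\<rho> t x)" for t x
  define f' where "f' t x = \<rho>_t t x * ((1/2) * (v t x \<bullet> v t x) + (u (\<rho> t x) + p (\<rho> t x) / \<rho> t x))
    + (\<rho> t x *\<^sub>R v t x) \<bullet> v_t t x" for t x
  have "continuous_on {0<..} u"
    using u by (meson DERIV_isCont continuous_at_imp_continuous_on greaterThan_iff)
  moreover have "continuous_on (I \<times> U) (\<lambda>z. \<rho> (fst z) (snd z))" "continuous_on (I \<times> U) (\<lambda>z. v (fst z) (snd z))"
    "continuous_on (I \<times> U) (\<lambda>z. \<rho>_t (fst z) (snd z))" "continuous_on (I \<times> U) (\<lambda>z. v_t (fst z) (snd z))"
    using cont by (simp_all add: case_prod_beta)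
  moreover have "\<rho> t x \<noteq> 0" if "t \<in> I" "x \<in> U" for t x
    using pos[OF that] by simp
  ultimately have "continuous_on (I \<times> U) (\<lambda>z. f (fst z) (snd z))"
    "continuous_on (I \<times> U) (\<lambda>z. f' (fst z) (snd z))"
    unfolding f_def f'_def using p pos
    by (auto intro!: continuous_intros continuous_on_compose2[of "{0<..}" u]
        continuous_on_compose2[of "{0<..}" p])
  moreover have "I \<times> closure \<Omega> \<subseteq> I \<times> U" using \<Omega>(3) by auto
  ultimately have f_cont: "continuous_on (I \<times> closure \<Omega>) (\<lambda>(t, x). f t x)"
    and f'_cont: "continuous_on (I \<times> closure \<Omega>) (\<lambda>(t, x). f' t x)"
    by (simp_all add: case_prod_beta continuous_on_subset)
  have "((\<lambda>t. integral \<Omega> (f t)) has_real_derivative integral \<Omega> (f' t0)) (at t0)"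
  proof (rule has_real_derivative_integral[OF _ closure_subset \<Omega>(2) I _ _ f'_cont])
    show "compact (closure \<Omega>)" using \<Omega>(1) by (simp add: compact_closure)
    show "continuous_on (closure \<Omega>) (f t)" if "t \<in> I" for t
      using continuous_on_slice[OF f_cont that order_refl] .
    show "((\<lambda>s. f s x) has_real_derivative f' t x) (at t)" if "t \<in> I" "x \<in> closure \<Omega>" for t x
      using that \<Omega>(3) pos \<rho>_t v_t u unfolding f_def f'_def
      by (intro energy_density_has_real_derivative) auto
  qed
  then show ?thesis unfolding f_def[abs_def] f'_def[abs_def] .
qed

theorem proposition2:
  fixes \<Omega> U :: "(real^3) set" and I :: "real set"
    and \<sigma> :: "(real^3) measure" and n :: "real^3 \<Rightarrow> real^3"
    and \<mu> \<kappa> :: real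
    and u p p' :: "real \<Rightarrow> real"
    and \<rho> \<rho>_t :: "real \<Rightarrow> real^3 \<Rightarrow> real"
    and v v_t :: "real \<Rightarrow> real^3 \<Rightarrow> real^3"
  defines "e_rho \<equiv> (\<lambda>t x. (1/2) * (v t x \<bullet> v t x) + (u (\<rho> t x) + p (\<rho> t x) / \<rho> t x))"
    and "e_v \<equiv> (\<lambda>t x. \<rho> t x *\<^sub>R v t x)"
    and "H \<equiv> (\<lambda>t. integral \<Omega> (\<lambda>x. (1/2) * \<rho> t x * (v t x \<bullet> v t x) + \<rho> t x * u (\<rho> t x)))"
    and "e_d \<equiv> (\<lambda>t x. ((4/3) * \<mu> + \<kappa>) * divg (\<lambda>y. (\<rho> t y *\<^sub>R v t y) /\<^sub>R \<rho> t y) x)"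
  assumes domain: "open \<Omega>" "connected \<Omega>" "bounded \<Omega>"
    and bdry: "gauss_boundary \<Omega> \<sigma> n"
    and visc: "\<mu> \<ge> 0" "\<kappa> \<ge> 0"
    and eos_p: "\<And>r. r > 0 \<Longrightarrow> (p has_real_derivative p' r) (at r)" "continuous_on {0<..} p'"
    and eos_u: "\<And>r. r > 0 \<Longrightarrow> (u has_real_derivative p r / r\<^sup>2) (at r)"
    and I_open: "open I" "is_interval I"
    and U_open: "open U" "closure \<Omega> \<subseteq> U"
    and pos: "\<And>t x. t \<in> I \<Longrightarrow> x \<in> U \<Longrightarrow> \<rho> t x > 0"
    and reg_space: "\<And>t. t \<in> I \<Longrightarrow> C2_on U (\<rho> t) \<and> C2_on U (v t)"
    and reg_cont: "continuous_on (I \<times> U) (\<lambda>(t, x). \<rho> t x)"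
                  "continuous_on (I \<times> U) (\<lambda>(t, x). v t x)"
    and rho_t: "\<And>t x. t \<in> I \<Longrightarrow> x \<in> U \<Longrightarrow> ((\<lambda>s. \<rho> s x) has_real_derivative \<rho>_t t x) (at t)"
    and v_t: "\<And>t x. t \<in> I \<Longrightarrow> x \<in> U \<Longrightarrow> ((\<lambda>s. v s x) has_vector_derivative v_t t x) (at t)"
    and reg_time: "continuous_on (I \<times> U) (\<lambda>(t, x). \<rho>_t t x)"
                  "continuous_on (I \<times> U) (\<lambda>(t, x). v_t t x)"
    and mass: "\<And>t x. t \<in> I \<Longrightarrow> x \<in> \<Omega> \<Longrightarrow> \<rho>_t t x = - divg (e_v t) x"
    and momentum: "\<And>t x. t \<in> I \<Longrightarrow> x \<in> \<Omega> \<Longrightarrow>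
        v_t t x = - grad (e_rho t) x - (1 / \<rho> t x) *\<^sub>R (gyro (curl (v t) x) *v e_v t x)
                  - (1 / \<rho> t x) *\<^sub>R Div (tau \<mu> \<kappa> (v t)) x"
    and vort_bdry: "\<And>t x. t \<in> I \<Longrightarrow> x \<in> frontier \<Omega> \<Longrightarrow> curl (v t) x = 0"
  shows "(\<forall>t\<in>I. \<forall>x\<in>\<Omega>.
            \<rho>_t t x = fst (pH_rhs (\<rho> t) (curl (v t)) \<mu> \<kappa> (e_rho t, e_v t)) x \<and>
            v_t t x = snd (pH_rhs (\<rho> t) (curl (v t)) \<mu> \<kappa> (e_rho t, e_v t)) x)
       \<and> (\<forall>t\<in>I. \<exists>D. (H has_real_derivative D) (at t) \<and>
            D \<le> (\<integral>x. (e_rho t x - e_d t x / \<rho> t x) * (- (e_v t x \<bullet> n x)) \<partial>\<sigma>))"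
proof -
  have p_cont: "continuous_on {0<..} p"
    using eos_p(1) by (meson DERIV_isCont continuous_at_imp_continuous_on greaterThan_iff)
  have \<rho>: "C1_on U (\<rho> t)" and v: "C2_on U (v t)" if "t \<in> I" for t
    using reg_space[OF that] unfolding C2_on_def by blast+
  have pH_form: "\<rho>_t t x = fst (pH_rhs (\<rho> t) (curl (v t)) \<mu> \<kappa> (e_rho t, e_v t)) x
      \<and> v_t t x = snd (pH_rhs (\<rho> t) (curl (v t)) \<mu> \<kappa> (e_rho t, e_v t)) x"
    if t: "t \<in> I" and x: "x \<in> \<Omega>" for t x
  proof -
    have "x \<in> U" using x U_open(2) closure_subset by blast
    then show ?thesis
      using mass[OF t x] momentum[OF t x] pos[OF t]
        snd_pH_rhs_eq_momentum_rhs[OF U_open(1) _ _ v[OF t], of x "\<rho> t" \<mu> \<kappa> "e_rho t"]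
      by (simp add: e_v_def fst_pH_rhs less_imp_neq[symmetric])
  qed
  have energy_balance: "\<exists>D. (H has_real_derivative D) (at t)
      \<and> D \<le> (\<integral>x. (e_rho t x - e_d t x / \<rho> t x) * (- (e_v t x \<bullet> n x)) \<partial>\<sigma>)"
    if t: "t \<in> I" for t
  proof (intro exI conjI)
    show "(H has_real_derivative integral \<Omega> (\<lambda>x. \<rho>_t t x * e_rho t x + e_v t x \<bullet> v_t t x)) (at t)"
      unfolding H_def e_rho_def e_v_def
      by (rule total_energy_has_real_derivative[OF domain(3) lmeasurable_open[OF domain(3,1)]
            U_open(2) I_open(1) t pos p_cont eos_u rho_t v_t reg_cont reg_time])
    have "C1_on U (e_rho t)"
      unfolding e_rho_def
      using C1_on_total_enthalpy[OF U_open(1) \<rho>[OF t] pos[OF t] C2_on_imp_C1_on[OF U_open(1) v[OF t]]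
          eos_p eos_u] .
    then show "integral \<Omega> (\<lambda>x. \<rho>_t t x * e_rho t x + e_v t x \<bullet> v_t t x)
        \<le> (\<integral>x. (e_rho t x - e_d t x / \<rho> t x) * (- (e_v t x \<bullet> n x)) \<partial>\<sigma>)"
      unfolding e_d_def e_v_def
      using mass[OF t] momentum[OF t] vort_bdry[OF t]
        continuous_on_slice[OF reg_time(1) t U_open(2)] continuous_on_slice[OF reg_time(2) t U_open(2)]
      by (intro energy_rate_le_boundary_flux[OF domain(1,3) bdry U_open visc \<rho>[OF t] pos[OF t] v[OF t]])
         (simp_all add: e_v_def)
  qed
  show ?thesis using pH_form energy_balance by blast
qed

end
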